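(* Let $(X,Y,R)$ be a random triple with $X\in\mathbb{R}^d$, $Y\in\{0,1\}$, $R\in\{0,1\}$, $0<P(R=1)<1$, with all conditional probabilities $P(R=r\mid X,Y)$, $P(Y=y\mid X,R=r)$ in $(0,1)$. Let $T:\mathbb{R}^d\to\mathbb{R}^k$ be measurable and for $\theta=(\alpha_0,\alpha_1,\beta_0,\beta_1)\in\mathbb{R}\times\mathbb{R}\times\mathbb{R}^k\times\mathbb{R}^k$ set $\omega(x,y;\theta)=\exp(\alpha_y+\beta_y^\top T(x))$, $$\eta_r(x,y;\theta)=\frac{P(R=1)}{P(R=1)+\omega(x,y;\theta)P(R=0)},\qquad \gamma(1\mid x;\theta)=(\alpha_1-\alpha_0)+(\beta_1-\beta_0)^\top T(x).$$ Let $\{\eta_1(\cdot;\xi):\xi\in\Xi\}$ be a family of measurable functions $\mathbb{R}^d\to(0,1)$, and set $$m_0(x;\theta,\xi)=\frac{e^{\gamma(1\mid x;\theta)}\eta_1(x;\xi)}{e^{\gamma(1\mid x;\theta)}\eta_1(x;\xi)+1-\eta_1(x;\xi)}.$$ Let $\tau:\mathbb{R}^d\times\{0,1\}\to\mathbb{R}$ and $m_{0,\tau}(x;\theta,\xi)=\tau(x,0)+\{\tau(x,1)-\tau(x,0)\}m_0(x;\theta,\xi)$. Fix $\theta^\star$ and $\xi^\star\in\Xi$, and assume all expectations below are finite. Define $$\text{a-bias}(\widehat\mu_{0,\mathrm{IW}})=\mathbb{E}\Big[\Big\{\tfrac{R}{P(R=1)}\omega(X,Y;\theta^\star)-\tfrac{1-R}{P(R=0)}\Big\}\tau(X,Y)\Big],\quad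 \text{a-bias}(\widehat\mu_{\mathrm{IW}})=\mathbb{E}\Big[\Big\{\tfrac{R}{\eta_r(X,Y;\theta^\star)}-1\Big\}\tau(X,Y)\Big],$$ $$\text{a-bias}(\widehat\mu_{0,\mathrm{DR}})=\mathbb{E}\Big[\Big\{\tfrac{R}{P(R=1)}\omega(X,Y;\theta^\star)-\tfrac{1-R}{P(R=0)}\Big\}\{\tau(X,Y)-m_{0,\tau}(X;\theta^\star,\xi^\star)\}\Big],$$ $$\text{a-bias}(\widehat\mu_{\mathrm{DR}})=\mathbb{E}\Big[\Big\{\tfrac{R}{\eta_r(X,Y;\theta^\star)}-1\Big\}\{\tau(X,Y)-m_{0,\tau}(X;\theta^\star,\xi^\star)\}\Big].$$ Then: (i) If $\mathbb{E}[R\mid X,Y]=\eta_r(X,Y;\theta^\star)$, then $\text{a-bias}(\widehat\mu_{0,\mathrm{IW}})=\text{a-bias}(\widehat\mu_{\mathrm{IW}})=\text{a-bias}(\widehat\mu_{0,\mathrm{DR}})=\text{a-bias}(\widehat\mu_{\mathrm{DR}})=0$. (ii) If $\gamma(1\mid x)=\gamma(1\mid x;\theta^\star)$ for all $x$ and $\mathbb{E}[Y\mid X,R=0]=m_0(X;\theta^\star,\xi^\star)$, then $\text{a-bias}(\widehat\mu_{0,\mathrm{DR}})=\text{a-bias}(\widehat\mu_{\mathrm{DR}})=0$. Here $\gamma(y\mid x)=\log\Big\{\dfrac{P(R=0\mid Y=y,X=x)\,P(R=1\mid Y=0,X=x)}{P(R=1\mid Y=y,X=x)\,P(R=0\mid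 Y=0,X=x)}\Big\}$ is the true log odds ratio.
   Context: $R=1$ indicates that $Y$ is observed, $R=0$ that it is missing. The quantities "a-bias" are the asymptotic biases of importance-weighted (IW) and doubly robust (DR) estimators of $\mathbb{E}[\tau(X,Y)\mid R=0]$ and $\mathbb{E}[\tau(X,Y)]$ whose tilt-parameter estimates converge to $\theta^\star$ and whose outcome-model estimates $\eta_1(\cdot;\widehat\xi)$ of $P(Y=1\mid X,R=1)$ converge to parameter $\xi^\star$; for the purposes of this statement they are defined by the displayed expressions. *)

theory Defs
  imports "HOL-Probability.Probability"
begin

type_synonym ('k) tilt = "real \<times> real \<times> (real^'k) \<times> (real^'k)"

definition omega_tilt :: "(real^'d \<Rightarrow> real^'k) \<Rightarrow> 'k tilt \<Rightarrow> real^'d \<Rightarrow> real \<Rightarrow> real" where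
  "omega_tilt T \<theta> x y = (case \<theta> of (a0, a1, b0, b1) \<Rightarrow>
      (if y = 1 then exp (a1 + b1 \<bullet> T x) else exp (a0 + b0 \<bullet> T x)))"

definition eta_r :: "real \<Rightarrow> real \<Rightarrow> (real^'d \<Rightarrow> real^'k) \<Rightarrow> 'k tilt \<Rightarrow> real^'d \<Rightarrow> real \<Rightarrow> real" where
  "eta_r p1 p0 T \<theta> x y = p1 / (p1 + omega_tilt T \<theta> x y * p0)"

definition gamma_model :: "(real^'d \<Rightarrow> real^'k) \<Rightarrow> 'k tilt \<Rightarrow> real^'d \<Rightarrow> real" where
  "gamma_model T \<theta> x = (case \<theta> of (a0, a1, b0, b1) \<Rightarrow> (a1 - a0) + (b1 - b0) \<bullet> T x)"

definition m0 :: "(real^'d \<Rightarrow> real^'k) \<Rightarrow> 'k tilt \<Rightarrow> (real^'d \<Rightarrow> real) \<Rightarrow> real^'d \<Rightarrow> real" where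
  "m0 T \<theta> eta1 x =
     exp (gamma_model T \<theta> x) * eta1 x / (exp (gamma_model T \<theta> x) * eta1 x + 1 - eta1 x)"

definition m0_tau :: "(real^'d \<Rightarrow> real \<Rightarrow> real) \<Rightarrow> (real^'d \<Rightarrow> real^'k) \<Rightarrow> 'k tilt \<Rightarrow> (real^'d \<Rightarrow> real) \<Rightarrow> real^'d \<Rightarrow> real" where
  "m0_tau \<tau> T \<theta> eta1 x = \<tau> x 0 + (\<tau> x 1 - \<tau> x 0) * m0 T \<theta> eta1 x"

text \<open>True log odds ratio gamma(1|x), in terms of pi(x,y) = P(R=1 | X=x, Y=y).\<close>
definition gamma_true :: "(real^'d \<Rightarrow> real \<Rightarrow> real) \<Rightarrow> real^'d \<Rightarrow> real" where
  "gamma_true \<pi> x = ln (((1 - \<pi> x 1) * \<pi> x 0) / (\<pi> x 1 * (1 - \<pi> x 0)))"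

end

theory Submission
  imports Defs
begin

(*
  Both IW weights are multiples of one another: R / eta_r - 1 = P(R=0) (R omega / P(R=1) - (1-R) / P(R=0)),
  so it suffices to treat the weight W = R omega / P(R=1) - (1-R) / P(R=0).

  (i) W = (omega / P(R=1) + 1 / P(R=0)) (R - eta_r(X,Y)) is a sigma(X,Y)-measurable multiple of the
  residual R - E[R | X,Y] when the propensity model is correct, hence orthogonal to every function
  of (X,Y), in particular to tau(X,Y) and to tau(X,Y) - m_{0,tau}(X).

  (ii) Since Y is binary, tau(X,Y) - m_{0,tau}(X) = delta(X) (Y - m_0(X)) with
  delta(x) = tau(x,1) - tau(x,0). The unobserved part (1-R) delta(X) (Y - m_0(X)) integrates to 0
  because (1-R) delta(X) is sigma(X,R)-measurable and m_0(X) = E[Y | X, R=0]. If the odds ratio is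
  correct, pi(x,y) omega(x,y) / (1 - pi(x,y)) does not depend on y, so conditioning on (X,Y) turns
  the observed part E[R omega(X,Y) g(X,Y)] into E[(1-R) K(X) g(X,Y)], which vanishes for the same
  reason.
*)

section \<open>Tilt weights\<close>

lemma tilt_weight_eq_residual:
  fixes p1 p0 w r :: real
  assumes "0 < p1" "0 < p0" "0 < w"
  shows "r / p1 * w - (1 - r) / p0 = (w / p1 + 1 / p0) * (r - p1 / (p1 + w * p0))"
proof -
  define D where "D = p1 + w * p0"
  have "0 < D" unfolding D_def using assms by (simp add: add_pos_pos)
  have e1: "w / p1 + 1 / p0 = D / (p1 * p0)" unfolding D_def using assms by (simp add: field_simps)
  have e2: "r - p1 / D = (r * D - p1) / D" using \<open>0 < D\<close> by (simp add: field_simps)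
  have "(w / p1 + 1 / p0) * (r - p1 / D) = (r * D - p1) / (p1 * p0)"
    unfolding e1 e2 using \<open>0 < D\<close> by simp
  also have "\<dots> = r / p1 * w - (1 - r) / p0"
    unfolding D_def using assms by (simp add: field_simps)
  finally show ?thesis unfolding D_def ..
qed

lemma inverse_propensity_weight_eq:
  fixes p1 p0 w r :: real
  assumes "0 < p1" "0 < p0" "0 < w"
  shows "r / (p1 / (p1 + w * p0)) - 1 = p0 * (r / p1 * w - (1 - r) / p0)"
proof -
  have "0 < p1 + w * p0" using assms by (simp add: add_pos_pos)
  then show ?thesis using assms by (simp add: field_simps)
qed

section \<open>Measurability and conditional expectations\<close>

lemma borel_measurable_section:
  fixes f :: "'a::second_countable_topology \<Rightarrow> 'b::second_countable_topology \<Rightarrow> 'c::topological_space"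
  assumes "(\<lambda>(x, y). f x y) \<in> borel_measurable borel"
  shows "(\<lambda>x. f x c) \<in> borel_measurable borel"
proof -
  have "(\<lambda>x. (x, c)) \<in> borel \<rightarrow>\<^sub>M borel \<Otimes>\<^sub>M borel" by measurable
  from measurable_compose[OF this assms[unfolded borel_prod[symmetric]]] show ?thesis by simp
qed

lemma subalgebra_vimage_algebra:
  assumes "Z \<in> measurable M N"
  shows "subalgebra M (vimage_algebra (space M) Z N)"
  using assms unfolding subalgebra_def
  by (auto simp: sets_vimage_algebra2 measurable_space intro!: measurable_sets)

lemma measurable_comp_vimage_algebra:
  assumes "Z \<in> space M \<rightarrow> space N" "h \<in> measurable N K"
  shows "(\<lambda>\<omega>. h (Z \<omega>)) \<in> measurable (vimage_algebra (space M) Z N) K"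
  using measurable_compose[OF measurable_vimage_algebra1[OF assms(1)] assms(2)] .

lemma (in finite_measure_subalgebra) real_cond_exp_one_minus:
  assumes "integrable M f"
  shows "AE x in M. real_cond_exp M F (\<lambda>x. 1 - f x) x = 1 - real_cond_exp M F f x"
proof -
  have "AE x in M. real_cond_exp M F (\<lambda>x. 1) x = 1"
    using real_cond_exp_F_meas[of "\<lambda>x. 1"] by simp
  moreover have "AE x in M. real_cond_exp M F (\<lambda>x. 1 - f x) x
      = real_cond_exp M F (\<lambda>x. 1) x - real_cond_exp M F f x"
    using assms by (intro real_cond_exp_diff) auto
  ultimately show ?thesis by eventually_elim simp
qed

context sigma_finite_subalgebra
begin

lemma nn_cond_exp_eq_real_cond_exp:
  assumes [measurable]: "g \<in> borel_measurable M"
    and g_nonneg: "\<And>x. x \<in> space M \<Longrightarrow> 0 \<le> g x" and "integrable M g"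
  shows "AE x in M. nn_cond_exp M F (\<lambda>x. ennreal (g x)) x = ennreal (real_cond_exp M F g x)"
proof -
  have "(\<integral>\<^sup>+ x. nn_cond_exp M F (\<lambda>x. ennreal (g x)) x \<partial>M) = (\<integral>\<^sup>+ x. 1 * ennreal (g x) \<partial>M)"
    using nn_cond_exp_intg[of "\<lambda>x. 1" "\<lambda>x. ennreal (g x)"] by simp
  also have "\<dots> = (\<integral>\<^sup>+ x. ennreal (norm (g x)) \<partial>M)"
    using g_nonneg by (intro nn_integral_cong) simp
  also have "\<dots> < \<infinity>" using \<open>integrable M g\<close> by (simp add: integrable_iff_bounded)
  finally have finite: "AE x in M. nn_cond_exp M F (\<lambda>x. ennreal (g x)) x \<noteq> \<infinity>"
    by (intro nn_integral_PInf_AE) auto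
  have "AE x in M. 0 = nn_cond_exp M F (\<lambda>x. 0) x"
    by (rule nn_cond_exp_F_meas) auto
  moreover have "\<And>x. x \<in> space M \<Longrightarrow> ennreal (- g x) = 0" using g_nonneg by (simp add: ennreal_neg)
  ultimately have neg_part: "AE x in M. nn_cond_exp M F (\<lambda>x. ennreal (- g x)) x = 0"
    using nn_cond_exp_cong[of "\<lambda>x. ennreal (- g x)" "\<lambda>x. 0"] by (auto elim!: AE_mp)
  show ?thesis
    using finite neg_part by eventually_elim (simp add: real_cond_exp_def ennreal_enn2real_if)
qed

lemma integrable_mult_of_integrable_mult_cond_exp:
  assumes [measurable]: "f \<in> borel_measurable F" "g \<in> borel_measurable M"
    and g_nonneg: "\<And>x. x \<in> space M \<Longrightarrow> 0 \<le> g x" and "integrable M g"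
    and int: "integrable M (\<lambda>x. f x * real_cond_exp M F g x)"
  shows "integrable M (\<lambda>x. f x * g x)"
proof -
  have [measurable]: "f \<in> borel_measurable M" by (rule measurable_from_subalg[OF subalg]) simp
  have "(\<integral>\<^sup>+ x. ennreal (norm (f x * g x)) \<partial>M) = (\<integral>\<^sup>+ x. ennreal \<bar>f x\<bar> * ennreal (g x) \<partial>M)"
    using g_nonneg by (intro nn_integral_cong) (simp add: abs_mult ennreal_mult)
  also have "\<dots> = (\<integral>\<^sup>+ x. ennreal \<bar>f x\<bar> * nn_cond_exp M F (\<lambda>x. ennreal (g x)) x \<partial>M)"
    by (rule nn_cond_exp_intg[symmetric]) auto
  also have "\<dots> = (\<integral>\<^sup>+ x. ennreal \<bar>f x\<bar> * ennreal (real_cond_exp M F g x) \<partial>M)"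
    using nn_cond_exp_eq_real_cond_exp[OF assms(2-4)] by (intro nn_integral_cong_AE) auto
  also have "\<dots> \<le> (\<integral>\<^sup>+ x. ennreal (norm (f x * real_cond_exp M F g x)) \<partial>M)"
    by (intro nn_integral_mono)
       (auto simp: ennreal_mult'[symmetric] abs_mult intro!: ennreal_leI mult_left_mono)
  also have "\<dots> < \<infinity>" using int by (simp add: integrable_iff_bounded)
  finally show ?thesis by (rule integrableI_bounded[rotated]) measurable
qed

lemma integral_mult_cond_exp_residual_eq_0:
  assumes [measurable]: "f \<in> borel_measurable F" "h \<in> borel_measurable F"
    and int_g: "integrable M g" and int_h: "integrable M h"
    and version: "AE x in M. f x \<noteq> 0 \<longrightarrow> real_cond_exp M F g x = h x"
    and int: "integrable M (\<lambda>x. f x * (g x - h x))"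
  shows "(\<integral>x. f x * (g x - h x) \<partial>M) = 0"
proof -
  have [measurable]: "g \<in> borel_measurable M" "h \<in> borel_measurable M"
    using int_g int_h by blast+
  have "AE x in M. real_cond_exp M F (\<lambda>x. g x - h x) x = real_cond_exp M F g x - h x"
    using real_cond_exp_diff[OF int_g int_h] real_cond_exp_F_meas[OF int_h assms(2)]
    by eventually_elim simp
  then have "AE x in M. f x * real_cond_exp M F (\<lambda>x. g x - h x) x = 0"
    using version by eventually_elim auto
  then have "(\<integral>x. f x * real_cond_exp M F (\<lambda>x. g x - h x) x \<partial>M) = 0"
    by (rule integral_eq_zero_AE)
  moreover have "(\<integral>x. f x * real_cond_exp M F (\<lambda>x. g x - h x) x \<partial>M) = (\<integral>x. f x * (g x - h x) \<partial>M)"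
    using int by (rule real_cond_exp_intg(2)) measurable
  ultimately show ?thesis by simp
qed

lemma integral_mult_eq_of_cond_exp:
  assumes [measurable]: "f \<in> borel_measurable F" "g \<in> borel_measurable F"
      "u \<in> borel_measurable M" "v \<in> borel_measurable M"
    and "integrable M v" "\<And>x. x \<in> space M \<Longrightarrow> 0 \<le> v x"
    and int_fu: "integrable M (\<lambda>x. f x * u x)"
    and ae: "AE x in M. f x * real_cond_exp M F u x = g x * real_cond_exp M F v x"
  shows "integrable M (\<lambda>x. g x * v x)" "(\<integral>x. g x * v x \<partial>M) = (\<integral>x. f x * u x \<partial>M)"
proof -
  have [measurable]: "f \<in> borel_measurable M" "g \<in> borel_measurable M"
    by (simp_all add: measurable_from_subalg[OF subalg])
  have "integrable M (\<lambda>x. f x * real_cond_exp M F u x)"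
    using int_fu by (rule real_cond_exp_intg(1)) measurable
  then have "integrable M (\<lambda>x. g x * real_cond_exp M F v x)"
    by (rule integrable_cong_AE_imp[OF _ _ ae]) measurable
  then show int_gv: "integrable M (\<lambda>x. g x * v x)"
    using integrable_mult_of_integrable_mult_cond_exp[OF assms(2,4,6,5)] by blast
  have "(\<integral>x. g x * v x \<partial>M) = (\<integral>x. g x * real_cond_exp M F v x \<partial>M)"
    using int_gv by (rule real_cond_exp_intg(2)[symmetric]) measurable
  also have "\<dots> = (\<integral>x. f x * real_cond_exp M F u x \<partial>M)"
    using ae by (intro integral_cong_AE) auto
  also have "\<dots> = (\<integral>x. f x * u x \<partial>M)"
    using int_fu by (rule real_cond_exp_intg(2)) measurable
  finally show "(\<integral>x. g x * v x \<partial>M) = (\<integral>x. f x * u x \<partial>M)" .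
qed

end

section \<open>The exponential tilt model\<close>

lemma omega_tilt_pos: "0 < omega_tilt T \<theta> x y"
  by (cases \<theta>) (simp add: omega_tilt_def)

lemma omega_tilt_1_eq: "omega_tilt T \<theta> x 1 = exp (gamma_model T \<theta> x) * omega_tilt T \<theta> x 0"
  by (cases \<theta>) (simp add: omega_tilt_def gamma_model_def exp_add[symmetric] inner_diff_left)

lemma eta_r_bounds:
  assumes "0 < p1" "0 < p0"
  shows "0 < eta_r p1 p0 T \<theta> x y" "eta_r p1 p0 T \<theta> x y \<le> 1"
proof -
  have "0 < omega_tilt T \<theta> x y * p0" using omega_tilt_pos[of T \<theta> x y] assms(2) by simp
  then show "0 < eta_r p1 p0 T \<theta> x y" "eta_r p1 p0 T \<theta> x y \<le> 1"
    using assms(1) unfolding eta_r_def by simp_all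
qed

lemma exp_gamma_true:
  assumes "0 < \<pi> x 0" "\<pi> x 0 < 1" "0 < \<pi> x 1" "\<pi> x 1 < 1"
  shows "exp (gamma_true \<pi> x) = (1 - \<pi> x 1) * \<pi> x 0 / (\<pi> x 1 * (1 - \<pi> x 0))"
  using assms unfolding gamma_true_def by (intro exp_ln) simp

lemma propensity_mult_omega_tilt_eq:
  assumes odds_ratio: "gamma_true \<pi> x = gamma_model T \<theta> x"
    and "0 < \<pi> x 0" "\<pi> x 0 < 1" "0 < \<pi> x 1" "\<pi> x 1 < 1"
    and "y = 0 \<or> y = 1"
  shows "\<pi> x y * omega_tilt T \<theta> x y = (1 - \<pi> x y) * (\<pi> x 0 / (1 - \<pi> x 0) * omega_tilt T \<theta> x 0)"
  using \<open>y = 0 \<or> y = 1\<close>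
proof
  assume "y = 1"
  have "omega_tilt T \<theta> x 1 = (1 - \<pi> x 1) * \<pi> x 0 / (\<pi> x 1 * (1 - \<pi> x 0)) * omega_tilt T \<theta> x 0"
    using omega_tilt_1_eq exp_gamma_true[of \<pi> x, OF assms(2-5)] odds_ratio by metis
  with \<open>y = 1\<close> show ?thesis using assms(2-5) by (simp add: field_simps)
qed (use assms(2,3) in \<open>simp add: field_simps\<close>)

lemma m0_bounds:
  assumes "0 < \<eta> x" "\<eta> x < 1"
  shows "0 < m0 T \<theta> \<eta> x" "m0 T \<theta> \<eta> x < 1"
proof -
  have "0 < exp (gamma_model T \<theta> x) * \<eta> x" using assms by simp
  moreover have "exp (gamma_model T \<theta> x) * \<eta> x < exp (gamma_model T \<theta> x) * \<eta> x + 1 - \<eta> x"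
    using assms by simp
  ultimately show "0 < m0 T \<theta> \<eta> x" "m0 T \<theta> \<eta> x < 1"
    unfolding m0_def by (simp_all add: divide_less_eq_1_pos)
qed

lemma tau_minus_m0_tau:
  assumes "y = 0 \<or> y = 1"
  shows "\<tau> x y - m0_tau \<tau> T \<theta> \<eta> x = (\<tau> x 1 - \<tau> x 0) * (y - m0 T \<theta> \<eta> x)"
  using assms unfolding m0_tau_def by (auto simp: algebra_simps)

lemma tilt_weight_mult_tau_residual:
  assumes "y = 0 \<or> y = 1"
  shows "(r / p1 * w - (1 - r) / p0) * (\<tau> x y - m0_tau \<tau> T \<theta> \<eta> x)
    = w * ((\<tau> x 1 - \<tau> x 0) / p1 * (y - m0 T \<theta> \<eta> x)) * r
      - (1 - r) * ((\<tau> x 1 - \<tau> x 0) / p0) * (y - m0 T \<theta> \<eta> x)"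
  unfolding tau_minus_m0_tau[OF assms] by (simp add: divide_inverse algebra_simps)

lemma borel_measurable_omega_tilt [measurable]:
  assumes [measurable]: "T \<in> borel_measurable borel"
  shows "(\<lambda>z. omega_tilt T \<theta> (fst z) (snd z)) \<in> borel_measurable (borel \<Otimes>\<^sub>M borel)"
  by (cases \<theta>) (simp add: omega_tilt_def; measurable)

lemma borel_measurable_omega_tilt_section [measurable]:
  assumes [measurable]: "T \<in> borel_measurable borel"
  shows "(\<lambda>x. omega_tilt T \<theta> x y) \<in> borel_measurable borel"
  by (cases \<theta>) (simp add: omega_tilt_def; measurable)

lemma borel_measurable_m0:
  assumes [measurable]: "T \<in> borel_measurable borel" "\<eta> \<in> borel_measurable borel"
  shows "m0 T \<theta> \<eta> \<in> borel_measurable borel"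
  unfolding m0_def gamma_model_def by (cases \<theta>) (simp; measurable)

lemma borel_measurable_m0_tau:
  assumes "(\<lambda>(x, y). \<tau> x y) \<in> borel_measurable borel"
    and [measurable]: "T \<in> borel_measurable borel" "\<eta> \<in> borel_measurable borel"
  shows "m0_tau \<tau> T \<theta> \<eta> \<in> borel_measurable borel"
proof -
  have [measurable]: "(\<lambda>x. \<tau> x 0) \<in> borel_measurable borel" "(\<lambda>x. \<tau> x 1) \<in> borel_measurable borel"
    using assms(1) by (rule borel_measurable_section)+
  show ?thesis unfolding m0_tau_def using borel_measurable_m0 by measurable
qed

section \<open>Vanishing of the asymptotic biases\<close>

locale tilted_missing_outcome = prob_space M for M :: "'a measure" +
  fixes X :: "'a \<Rightarrow> real^'d" and Y R :: "'a \<Rightarrow> real"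
    and T :: "real^'d \<Rightarrow> real^'k" and \<theta> :: "'k tilt"
    and p1 p0 :: real and FXY FXR :: "'a measure"
  assumes X_meas [measurable]: "X \<in> borel_measurable M"
    and Y_meas [measurable]: "Y \<in> borel_measurable M"
    and R_meas [measurable]: "R \<in> borel_measurable M"
    and T_meas [measurable]: "T \<in> borel_measurable borel"
    and Y_01: "\<forall>\<omega>\<in>space M. Y \<omega> \<in> {0, 1}"
    and R_01: "\<forall>\<omega>\<in>space M. R \<omega> \<in> {0, 1}"
    and p1_def: "p1 = prob {\<omega> \<in> space M. R \<omega> = 1}"
    and p0_def: "p0 = prob {\<omega> \<in> space M. R \<omega> = 0}"
    and p1_pos: "0 < p1" and p1_less_1: "p1 < 1"
    and FXY_def: "FXY = vimage_algebra (space M) (\<lambda>\<omega>. (X \<omega>, Y \<omega>)) borel"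
    and FXR_def: "FXR = vimage_algebra (space M) (\<lambda>\<omega>. (X \<omega>, R \<omega>)) borel"
begin

lemma p0_pos: "0 < p0"
proof -
  have "{\<omega> \<in> space M. R \<omega> = 0} = space M - {\<omega> \<in> space M. R \<omega> = 1}" using R_01 by auto
  then have "p0 = 1 - p1" unfolding p0_def p1_def by (simp add: prob_compl)
  then show ?thesis using p1_less_1 by simp
qed

sublocale XY: finite_measure_subalgebra M FXY
  unfolding finite_measure_subalgebra_def finite_measure_subalgebra_axioms_def FXY_def
  by (simp add: finite_measure_axioms subalgebra_vimage_algebra)

sublocale XR: finite_measure_subalgebra M FXR
  unfolding finite_measure_subalgebra_def finite_measure_subalgebra_axioms_def FXR_def
  by (simp add: finite_measure_axioms subalgebra_vimage_algebra)

lemma measurable_FXY: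
  assumes "(\<lambda>(x, y). h x y) \<in> borel_measurable (borel \<Otimes>\<^sub>M borel)"
  shows "(\<lambda>\<omega>. h (X \<omega>) (Y \<omega>)) \<in> borel_measurable FXY"
  using measurable_comp_vimage_algebra[OF _ assms, of "\<lambda>\<omega>. (X \<omega>, Y \<omega>)" M]
  unfolding FXY_def borel_prod by simp

lemma measurable_FXR:
  assumes "(\<lambda>(x, r). h x r) \<in> borel_measurable (borel \<Otimes>\<^sub>M borel)"
  shows "(\<lambda>\<omega>. h (X \<omega>) (R \<omega>)) \<in> borel_measurable FXR"
  using measurable_comp_vimage_algebra[OF _ assms, of "\<lambda>\<omega>. (X \<omega>, R \<omega>)" M]
  unfolding FXR_def borel_prod by simp

lemma borel_measurable_omega_tilt_FXY [measurable]:
  "(\<lambda>\<omega>. omega_tilt T \<theta> (X \<omega>) (Y \<omega>)) \<in> borel_measurable FXY"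
  by (rule measurable_FXY) measurable

lemma borel_measurable_omega_tilt_XY [measurable]:
  "(\<lambda>\<omega>. omega_tilt T \<theta> (X \<omega>) (Y \<omega>)) \<in> borel_measurable M"
  by (rule measurable_from_subalg[OF XY.subalg borel_measurable_omega_tilt_FXY])

lemma integrable_R: "integrable M R"
  by (rule integrable_const_bound[where B=1]) (use R_01 in \<open>auto intro!: AE_I2\<close>)

lemma integrable_Y: "integrable M Y"
  by (rule integrable_const_bound[where B=1]) (use Y_01 in \<open>auto intro!: AE_I2\<close>)

lemma integral_inverse_propensity_weight_eq:
  "(\<integral>\<omega>. (R \<omega> / eta_r p1 p0 T \<theta> (X \<omega>) (Y \<omega>) - 1) * G \<omega> \<partial>M)
    = p0 * (\<integral>\<omega>. (R \<omega> / p1 * omega_tilt T \<theta> (X \<omega>) (Y \<omega>) - (1 - R \<omega>) / p0) * G \<omega> \<partial>M)"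
  unfolding eta_r_def inverse_propensity_weight_eq[OF p1_pos p0_pos omega_tilt_pos] mult.assoc
  by (rule integral_mult_right_zero)

theorem integral_tilt_weight_eq_0:
  assumes propensity: "AE \<omega> in M. real_cond_exp M FXY R \<omega> = eta_r p1 p0 T \<theta> (X \<omega>) (Y \<omega>)"
    and G_meas: "G \<in> borel_measurable FXY"
    and int: "integrable M (\<lambda>\<omega>. (R \<omega> / p1 * omega_tilt T \<theta> (X \<omega>) (Y \<omega>) - (1 - R \<omega>) / p0) * G \<omega>)"
  shows "(\<integral>\<omega>. (R \<omega> / p1 * omega_tilt T \<theta> (X \<omega>) (Y \<omega>) - (1 - R \<omega>) / p0) * G \<omega> \<partial>M) = 0"
proof -
  define e where "e \<omega> = eta_r p1 p0 T \<theta> (X \<omega>) (Y \<omega>)" for \<omega>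
  define f where "f \<omega> = G \<omega> * (omega_tilt T \<theta> (X \<omega>) (Y \<omega>) / p1 + 1 / p0)" for \<omega>
  have residual: "(R \<omega> / p1 * omega_tilt T \<theta> (X \<omega>) (Y \<omega>) - (1 - R \<omega>) / p0) * G \<omega> = f \<omega> * (R \<omega> - e \<omega>)" for \<omega>
    unfolding f_def e_def eta_r_def tilt_weight_eq_residual[OF p1_pos p0_pos omega_tilt_pos] by simp
  have e_meas: "e \<in> borel_measurable FXY"
    unfolding e_def eta_r_def by measurable
  have "integrable M e"
  proof (rule integrable_const_bound[where B=1])
    show "AE \<omega> in M. norm (e \<omega>) \<le> 1"
      using eta_r_bounds[OF p1_pos p0_pos, of T \<theta>] by (simp add: e_def abs_of_pos)
    show "e \<in> borel_measurable M" by (rule measurable_from_subalg[OF XY.subalg e_meas])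
  qed
  moreover have "f \<in> borel_measurable FXY"
    unfolding f_def using G_meas by measurable
  moreover have "AE \<omega> in M. f \<omega> \<noteq> 0 \<longrightarrow> real_cond_exp M FXY R \<omega> = e \<omega>"
    using propensity unfolding e_def by (auto elim: AE_mp)
  ultimately have "(\<integral>\<omega>. f \<omega> * (R \<omega> - e \<omega>) \<partial>M) = 0"
    using int integrable_R e_meas unfolding residual
    by (intro XY.integral_mult_cond_exp_residual_eq_0)
  then show ?thesis unfolding residual .
qed

lemma integral_unobserved_residual_eq_0:
  assumes [measurable]: "m \<in> borel_measurable borel" "K \<in> borel_measurable borel"
    and int_m: "integrable M (\<lambda>\<omega>. m (X \<omega>))"
    and outcome: "AE \<omega> in M. R \<omega> = 0 \<longrightarrow> real_cond_exp M FXR Y \<omega> = m (X \<omega>)"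
    and int: "integrable M (\<lambda>\<omega>. (1 - R \<omega>) * K (X \<omega>) * (Y \<omega> - m (X \<omega>)))"
  shows "(\<integral>\<omega>. (1 - R \<omega>) * K (X \<omega>) * (Y \<omega> - m (X \<omega>)) \<partial>M) = 0"
proof -
  have "(\<lambda>\<omega>. (1 - R \<omega>) * K (X \<omega>)) \<in> borel_measurable FXR"
    by (rule measurable_FXR[of "\<lambda>x r. (1 - r) * K x"]) measurable
  moreover have "(\<lambda>\<omega>. m (X \<omega>)) \<in> borel_measurable FXR"
    by (rule measurable_FXR[of "\<lambda>x r. m x"]) measurable
  moreover have "AE \<omega> in M. (1 - R \<omega>) * K (X \<omega>) \<noteq> 0 \<longrightarrow> real_cond_exp M FXR Y \<omega> = m (X \<omega>)"
    using outcome AE_space by eventually_elim (use R_01 in auto)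
  ultimately show ?thesis
    using integrable_Y int_m int by (intro XR.integral_mult_cond_exp_residual_eq_0)
qed

text \<open>A correct odds ratio makes \<open>\<pi> x y / (1 - \<pi> x y) * omega_tilt T \<theta> x y = K x\<close> free of \<open>y\<close>,
  so conditioning on \<open>(X, Y)\<close> trades the observed indicator \<open>R\<close> for the unobserved one \<open>1 - R\<close>.\<close>

lemma integral_tilted_observed_eq_unobserved:
  assumes \<pi>_meas: "(\<lambda>(x, y). \<pi> x y) \<in> borel_measurable borel"
    and \<pi>_version: "AE \<omega> in M. real_cond_exp M FXY R \<omega> = \<pi> (X \<omega>) (Y \<omega>)"
    and \<pi>_bounds: "\<forall>x y. 0 < \<pi> x y \<and> \<pi> x y < 1"
    and odds_ratio: "\<forall>x. gamma_true \<pi> x = gamma_model T \<theta> x"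
    and G_meas [measurable]: "G \<in> borel_measurable FXY"
    and int: "integrable M (\<lambda>\<omega>. omega_tilt T \<theta> (X \<omega>) (Y \<omega>) * G \<omega> * R \<omega>)"
  defines "K \<equiv> \<lambda>x. \<pi> x 0 / (1 - \<pi> x 0) * omega_tilt T \<theta> x 0"
  shows "integrable M (\<lambda>\<omega>. K (X \<omega>) * G \<omega> * (1 - R \<omega>))"
    and "(\<integral>\<omega>. K (X \<omega>) * G \<omega> * (1 - R \<omega>) \<partial>M)
      = (\<integral>\<omega>. omega_tilt T \<theta> (X \<omega>) (Y \<omega>) * G \<omega> * R \<omega> \<partial>M)"
proof -
  have [measurable]: "(\<lambda>x. \<pi> x 0) \<in> borel_measurable borel"
    using \<pi>_meas by (rule borel_measurable_section)
  have f_meas: "(\<lambda>\<omega>. omega_tilt T \<theta> (X \<omega>) (Y \<omega>) * G \<omega>) \<in> borel_measurable FXY"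
    by measurable
  have g_meas: "(\<lambda>\<omega>. K (X \<omega>) * G \<omega>) \<in> borel_measurable FXY"
    using measurable_FXY[of "\<lambda>x y. K x"] unfolding K_def by measurable
  have unobserved_nonneg: "\<And>\<omega>. \<omega> \<in> space M \<Longrightarrow> 0 \<le> 1 - R \<omega>" using R_01 by auto
  have ae: "AE \<omega> in M. omega_tilt T \<theta> (X \<omega>) (Y \<omega>) * G \<omega> * real_cond_exp M FXY R \<omega>
      = K (X \<omega>) * G \<omega> * real_cond_exp M FXY (\<lambda>\<omega>. 1 - R \<omega>) \<omega>"
    using \<pi>_version XY.real_cond_exp_one_minus[OF integrable_R] AE_space
  proof eventually_elim
    case (elim \<omega>)
    have "\<pi> (X \<omega>) (Y \<omega>) * omega_tilt T \<theta> (X \<omega>) (Y \<omega>) = (1 - \<pi> (X \<omega>) (Y \<omega>)) * K (X \<omega>)"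
      unfolding K_def using odds_ratio \<pi>_bounds Y_01 elim(3)
      by (intro propensity_mult_omega_tilt_eq) auto
    then show ?case unfolding elim(2) elim(1) by (metis mult.commute mult.left_commute)
  qed
  show "integrable M (\<lambda>\<omega>. K (X \<omega>) * G \<omega> * (1 - R \<omega>))"
    and "(\<integral>\<omega>. K (X \<omega>) * G \<omega> * (1 - R \<omega>) \<partial>M)
      = (\<integral>\<omega>. omega_tilt T \<theta> (X \<omega>) (Y \<omega>) * G \<omega> * R \<omega> \<partial>M)"
    using integrable_R
    by (intro XY.integral_mult_eq_of_cond_exp[OF f_meas g_meas _ _ _ unobserved_nonneg int ae];
        simp)+
qed

lemma integral_tilted_observed_residual_eq_0:
  assumes \<pi>_meas: "(\<lambda>(x, y). \<pi> x y) \<in> borel_measurable borel"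
    and \<pi>_version: "AE \<omega> in M. real_cond_exp M FXY R \<omega> = \<pi> (X \<omega>) (Y \<omega>)"
    and \<pi>_bounds: "\<forall>x y. 0 < \<pi> x y \<and> \<pi> x y < 1"
    and odds_ratio: "\<forall>x. gamma_true \<pi> x = gamma_model T \<theta> x"
    and [measurable]: "m \<in> borel_measurable borel" "\<delta> \<in> borel_measurable borel"
    and int_m: "integrable M (\<lambda>\<omega>. m (X \<omega>))"
    and outcome: "AE \<omega> in M. R \<omega> = 0 \<longrightarrow> real_cond_exp M FXR Y \<omega> = m (X \<omega>)"
    and int: "integrable M (\<lambda>\<omega>. omega_tilt T \<theta> (X \<omega>) (Y \<omega>) * (\<delta> (X \<omega>) * (Y \<omega> - m (X \<omega>))) * R \<omega>)"
  shows "(\<integral>\<omega>. omega_tilt T \<theta> (X \<omega>) (Y \<omega>) * (\<delta> (X \<omega>) * (Y \<omega> - m (X \<omega>))) * R \<omega> \<partial>M) = 0"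
proof -
  define K where "K x = \<pi> x 0 / (1 - \<pi> x 0) * omega_tilt T \<theta> x 0" for x
  have [measurable]: "K \<in> borel_measurable borel"
    using borel_measurable_section[OF \<pi>_meas] unfolding K_def by measurable
  have "(\<lambda>\<omega>. \<delta> (X \<omega>) * (Y \<omega> - m (X \<omega>))) \<in> borel_measurable FXY"
    by (rule measurable_FXY[of "\<lambda>x y. \<delta> x * (y - m x)"]) measurable
  note transfer = integral_tilted_observed_eq_unobserved[OF \<pi>_meas \<pi>_version \<pi>_bounds odds_ratio this int,
      folded K_def]
  have unobserved: "K (X \<omega>) * (\<delta> (X \<omega>) * (Y \<omega> - m (X \<omega>))) * (1 - R \<omega>)
      = (1 - R \<omega>) * (K (X \<omega>) * \<delta> (X \<omega>)) * (Y \<omega> - m (X \<omega>))" for \<omega>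
    by (simp add: ac_simps)
  show ?thesis
    using transfer integral_unobserved_residual_eq_0[of m "\<lambda>x. K x * \<delta> x", OF _ _ int_m outcome]
    unfolding unobserved by simp
qed

lemma integrable_m0_X:
  assumes "\<eta> \<in> borel_measurable borel" "\<forall>x. 0 < \<eta> x \<and> \<eta> x < 1"
  shows "integrable M (\<lambda>\<omega>. m0 T \<theta> \<eta> (X \<omega>))"
proof (rule integrable_const_bound[where B=1])
  show "AE \<omega> in M. norm (m0 T \<theta> \<eta> (X \<omega>)) \<le> 1"
  proof (rule AE_I2)
    fix \<omega>
    have "0 < m0 T \<theta> \<eta> (X \<omega>)" "m0 T \<theta> \<eta> (X \<omega>) < 1"
      using m0_bounds[where T=T and \<theta>=\<theta> and \<eta>=\<eta> and x="X \<omega>"] assms(2) by auto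
    then show "norm (m0 T \<theta> \<eta> (X \<omega>)) \<le> 1" by simp
  qed
qed (use borel_measurable_m0[OF T_meas assms(1)] in measurable)

theorem integral_doubly_robust_eq_0:
  assumes \<pi>_meas: "(\<lambda>(x, y). \<pi> x y) \<in> borel_measurable borel"
    and \<pi>_version: "AE \<omega> in M. real_cond_exp M FXY R \<omega> = \<pi> (X \<omega>) (Y \<omega>)"
    and \<pi>_bounds: "\<forall>x y. 0 < \<pi> x y \<and> \<pi> x y < 1"
    and odds_ratio: "\<forall>x. gamma_true \<pi> x = gamma_model T \<theta> x"
    and \<tau>_meas: "(\<lambda>(x, y). \<tau> x y) \<in> borel_measurable borel"
    and \<eta>_meas: "\<eta> \<in> borel_measurable borel"
    and \<eta>_bounds: "\<forall>x. 0 < \<eta> x \<and> \<eta> x < 1"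
    and outcome: "AE \<omega> in M. R \<omega> = 0 \<longrightarrow> real_cond_exp M FXR Y \<omega> = m0 T \<theta> \<eta> (X \<omega>)"
    and int: "integrable M (\<lambda>\<omega>. (R \<omega> / p1 * omega_tilt T \<theta> (X \<omega>) (Y \<omega>) - (1 - R \<omega>) / p0)
                 * (\<tau> (X \<omega>) (Y \<omega>) - m0_tau \<tau> T \<theta> \<eta> (X \<omega>)))"
  shows "(\<integral>\<omega>. (R \<omega> / p1 * omega_tilt T \<theta> (X \<omega>) (Y \<omega>) - (1 - R \<omega>) / p0)
           * (\<tau> (X \<omega>) (Y \<omega>) - m0_tau \<tau> T \<theta> \<eta> (X \<omega>)) \<partial>M) = 0"
    (is "integral\<^sup>L M ?dr = 0")
proof -
  define m where "m = m0 T \<theta> \<eta>"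
  define \<delta> where "\<delta> x = \<tau> x 1 - \<tau> x 0" for x
  define observed where
    "observed \<omega> = omega_tilt T \<theta> (X \<omega>) (Y \<omega>) * (\<delta> (X \<omega>) / p1 * (Y \<omega> - m (X \<omega>))) * R \<omega>" for \<omega>
  define unobserved where "unobserved \<omega> = (1 - R \<omega>) * (\<delta> (X \<omega>) / p0) * (Y \<omega> - m (X \<omega>))" for \<omega>
  have [measurable]: "m \<in> borel_measurable borel" "\<delta> \<in> borel_measurable borel"
    unfolding m_def \<delta>_def using borel_measurable_m0[OF T_meas \<eta>_meas] borel_measurable_section[OF \<tau>_meas]
    by measurable
  have int_m: "integrable M (\<lambda>\<omega>. m (X \<omega>))"
    unfolding m_def using \<eta>_meas \<eta>_bounds by (rule integrable_m0_X)
  have split: "?dr \<omega> = observed \<omega> - unobserved \<omega>" if "\<omega> \<in> space M" for \<omega>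
    unfolding observed_def unobserved_def m_def \<delta>_def
    using that Y_01 by (intro tilt_weight_mult_tau_residual) auto
  have int_observed: "integrable M observed"
  proof (rule Bochner_Integration.integrable_bound[OF int])
    show "observed \<in> borel_measurable M" unfolding observed_def by measurable
    have "norm (observed \<omega>) \<le> norm (?dr \<omega>)" if "\<omega> \<in> space M" for \<omega>
      using R_01 that unfolding split[OF that] by (auto simp: observed_def unobserved_def)
    then show "AE \<omega> in M. norm (observed \<omega>) \<le> norm (?dr \<omega>)" by (rule AE_I2)
  qed
  have int_unobserved: "integrable M unobserved"
    using Bochner_Integration.integrable_diff[OF int_observed int]
    by (rule Bochner_Integration.integrable_cong[OF refl, THEN iffD1, rotated]) (simp only: split; simp)
  have "integral\<^sup>L M observed = 0"
    using int_observed unfolding observed_def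
    by (intro integral_tilted_observed_residual_eq_0[OF \<pi>_meas \<pi>_version \<pi>_bounds odds_ratio _ _ int_m]
        outcome[folded m_def]) measurable
  moreover have "integral\<^sup>L M unobserved = 0"
    using int_unobserved unfolding unobserved_def
    by (intro integral_unobserved_residual_eq_0 int_m outcome[folded m_def]) measurable
  moreover have "integral\<^sup>L M ?dr = integral\<^sup>L M (\<lambda>\<omega>. observed \<omega> - unobserved \<omega>)"
    by (rule Bochner_Integration.integral_cong[OF refl]) (rule split)
  ultimately show ?thesis
    by (simp add: Bochner_Integration.integral_diff[OF int_observed int_unobserved])
qed

end

theorem theorem1:
  fixes M :: "'a measure"
    and X :: "'a \<Rightarrow> real^'d" and Y R :: "'a \<Rightarrow> real"
    and T :: "real^'d \<Rightarrow> real^'k"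
    and \<pi> :: "real^'d \<Rightarrow> real \<Rightarrow> real"
    and Xi :: "'x set" and eta1 :: "'x \<Rightarrow> real^'d \<Rightarrow> real"
    and \<tau> :: "real^'d \<Rightarrow> real \<Rightarrow> real"
    and \<theta>s :: "'k tilt" and \<xi>s :: 'x
    and p1 p0 :: real and FXY FXR :: "'a measure"
  assumes M: "prob_space M"
    and X_meas: "X \<in> borel_measurable M"
    and Y_meas: "Y \<in> borel_measurable M"
    and R_meas: "R \<in> borel_measurable M"
    and Y_01: "\<forall>\<omega>\<in>space M. Y \<omega> \<in> {0, 1}"
    and R_01: "\<forall>\<omega>\<in>space M. R \<omega> \<in> {0, 1}"
    and p1_def: "p1 = measure M {\<omega> \<in> space M. R \<omega> = 1}"
    and p0_def: "p0 = measure M {\<omega> \<in> space M. R \<omega> = 0}"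
    and p1_bounds: "0 < p1" "p1 < 1"
    and FXY_def: "FXY = vimage_algebra (space M) (\<lambda>\<omega>. (X \<omega>, Y \<omega>)) borel"
    and FXR_def: "FXR = vimage_algebra (space M) (\<lambda>\<omega>. (X \<omega>, R \<omega>)) borel"
    \<comment> \<open>pi(x,y) is a (measurable) version of P(R=1 | X=x, Y=y), with values in (0,1)\<close>
    and \<pi>_meas: "(\<lambda>(x, y). \<pi> x y) \<in> borel_measurable borel"
    and \<pi>_version: "AE \<omega> in M. real_cond_exp M FXY R \<omega> = \<pi> (X \<omega>) (Y \<omega>)"
    and \<pi>_bounds: "\<forall>x y. 0 < \<pi> x y \<and> \<pi> x y < 1"
    \<comment> \<open>P(Y = y | X, R = r) in (0,1)\<close>
    and PY_bounds: "\<forall>y\<in>{0::real, 1}. AE \<omega> in M.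
        0 < real_cond_exp M FXR (\<lambda>\<omega>. if Y \<omega> = y then 1 else 0) \<omega> \<and>
        real_cond_exp M FXR (\<lambda>\<omega>. if Y \<omega> = y then 1 else 0) \<omega> < 1"
    and T_meas: "T \<in> borel_measurable borel"
    and eta1_meas: "\<forall>\<xi>\<in>Xi. eta1 \<xi> \<in> borel_measurable borel"
    and eta1_bounds: "\<forall>\<xi>\<in>Xi. \<forall>x. 0 < eta1 \<xi> x \<and> eta1 \<xi> x < 1"
    and \<tau>_meas: "(\<lambda>(x, y). \<tau> x y) \<in> borel_measurable borel"
    and \<xi>s_in: "\<xi>s \<in> Xi"
    \<comment> \<open>all expectations below are finite\<close>
    and int_IW0: "integrable M (\<lambda>\<omega>. (R \<omega> / p1 * omega_tilt T \<theta>s (X \<omega>) (Y \<omega>) - (1 - R \<omega>) / p0)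
                       * \<tau> (X \<omega>) (Y \<omega>))"
    and int_IW: "integrable M (\<lambda>\<omega>. (R \<omega> / eta_r p1 p0 T \<theta>s (X \<omega>) (Y \<omega>) - 1) * \<tau> (X \<omega>) (Y \<omega>))"
    and int_DR0: "integrable M (\<lambda>\<omega>. (R \<omega> / p1 * omega_tilt T \<theta>s (X \<omega>) (Y \<omega>) - (1 - R \<omega>) / p0)
                       * (\<tau> (X \<omega>) (Y \<omega>) - m0_tau \<tau> T \<theta>s (eta1 \<xi>s) (X \<omega>)))"
    and int_DR: "integrable M (\<lambda>\<omega>. (R \<omega> / eta_r p1 p0 T \<theta>s (X \<omega>) (Y \<omega>) - 1)
                       * (\<tau> (X \<omega>) (Y \<omega>) - m0_tau \<tau> T \<theta>s (eta1 \<xi>s) (X \<omega>)))"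
  shows
    "((AE \<omega> in M. real_cond_exp M FXY R \<omega> = eta_r p1 p0 T \<theta>s (X \<omega>) (Y \<omega>)) \<longrightarrow>
        (\<integral>\<omega>. (R \<omega> / p1 * omega_tilt T \<theta>s (X \<omega>) (Y \<omega>) - (1 - R \<omega>) / p0)
               * \<tau> (X \<omega>) (Y \<omega>) \<partial>M) = 0 \<and>
        (\<integral>\<omega>. (R \<omega> / eta_r p1 p0 T \<theta>s (X \<omega>) (Y \<omega>) - 1) * \<tau> (X \<omega>) (Y \<omega>) \<partial>M) = 0 \<and>
        (\<integral>\<omega>. (R \<omega> / p1 * omega_tilt T \<theta>s (X \<omega>) (Y \<omega>) - (1 - R \<omega>) / p0)
               * (\<tau> (X \<omega>) (Y \<omega>) - m0_tau \<tau> T \<theta>s (eta1 \<xi>s) (X \<omega>)) \<partial>M) = 0 \<and>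
        (\<integral>\<omega>. (R \<omega> / eta_r p1 p0 T \<theta>s (X \<omega>) (Y \<omega>) - 1)
               * (\<tau> (X \<omega>) (Y \<omega>) - m0_tau \<tau> T \<theta>s (eta1 \<xi>s) (X \<omega>)) \<partial>M) = 0)
     \<and>
     (((\<forall>x. gamma_true \<pi> x = gamma_model T \<theta>s x) \<and>
       (AE \<omega> in M. R \<omega> = 0 \<longrightarrow> real_cond_exp M FXR Y \<omega> = m0 T \<theta>s (eta1 \<xi>s) (X \<omega>))) \<longrightarrow>
        (\<integral>\<omega>. (R \<omega> / p1 * omega_tilt T \<theta>s (X \<omega>) (Y \<omega>) - (1 - R \<omega>) / p0)
               * (\<tau> (X \<omega>) (Y \<omega>) - m0_tau \<tau> T \<theta>s (eta1 \<xi>s) (X \<omega>)) \<partial>M) = 0 \<and>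
        (\<integral>\<omega>. (R \<omega> / eta_r p1 p0 T \<theta>s (X \<omega>) (Y \<omega>) - 1)
               * (\<tau> (X \<omega>) (Y \<omega>) - m0_tau \<tau> T \<theta>s (eta1 \<xi>s) (X \<omega>)) \<partial>M) = 0)"
proof -
  interpret tilted_missing_outcome M X Y R T \<theta>s p1 p0 FXY FXR
    by (intro tilted_missing_outcome.intro tilted_missing_outcome_axioms.intro) (fact assms)+
  have \<eta>: "eta1 \<xi>s \<in> borel_measurable borel" "\<forall>x. 0 < eta1 \<xi>s x \<and> eta1 \<xi>s x < 1"
    using eta1_meas eta1_bounds \<xi>s_in by auto
  have [measurable]: "(\<lambda>z. \<tau> (fst z) (snd z)) \<in> borel_measurable (borel \<Otimes>\<^sub>M borel)"
      "m0_tau \<tau> T \<theta>s (eta1 \<xi>s) \<in> borel_measurable borel"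
    using \<tau>_meas borel_measurable_m0_tau[OF \<tau>_meas T_meas \<eta>(1)] by (simp_all add: borel_prod split_beta')
  have \<tau>_FXY: "(\<lambda>\<omega>. \<tau> (X \<omega>) (Y \<omega>)) \<in> borel_measurable FXY"
    by (intro measurable_FXY) measurable
  have residual_FXY: "(\<lambda>\<omega>. \<tau> (X \<omega>) (Y \<omega>) - m0_tau \<tau> T \<theta>s (eta1 \<xi>s) (X \<omega>)) \<in> borel_measurable FXY"
    by (intro measurable_FXY[of "\<lambda>x y. \<tau> x y - m0_tau \<tau> T \<theta>s (eta1 \<xi>s) x"]) measurable
  show ?thesis
    using integral_tilt_weight_eq_0[OF _ \<tau>_FXY int_IW0] integral_tilt_weight_eq_0[OF _ residual_FXY int_DR0]
      integral_doubly_robust_eq_0[OF \<pi>_meas \<pi>_version \<pi>_bounds _ \<tau>_meas \<eta> _ int_DR0]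
    by (simp add: integral_inverse_propensity_weight_eq)
qed

end
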